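(* Let $p$ be a design (probability distribution of a random treatment vector $\mathbf Z\in\{0,1\}^n$) such that with probability one at least one unit is treated and at least one unit is in control. Suppose each unit $i$ has potential outcomes $Y_i(z,e)$, $z\in\{0,1\}$, $e\in\{0,1,\dots,K_i-1\}$, of the form $Y_i(z,e)=A_i(z)+B_i(e)+zC_i(e)$ with $B_i(0)=C_i(0)=0$. Let $\mathrm{DTE}=\frac1n\sum_{i=1}^n\big(Y_i(1,0)-Y_i(0,0)\big)$ and let $$\hat\beta_{naive}=\frac{\sum_i Y_i^{obs}Z_i}{\sum_i Z_i}-\frac{\sum_i Y_i^{obs}(1-Z_i)}{\sum_i(1-Z_i)}.$$ Then $\mathrm{DTE}=\frac1n\sum_{i=1}^n(A_i(1)-A_i(0))$ and $$\mathbb E[\hat\beta_{naive}]-\mathrm{DTE}=\sum_i\Big(A_i(1)\big(\alpha_i(1)-\tfrac1n\big)-A_i(0)\big(\alpha_i(0)-\tfrac1n\big)\Big)+\sum_i\sum_{e\neq0}B_i(e)\big(\alpha_i(1,e)-\alpha_i(0,e)\big)+\sum_i\sum_{e\ne0}C_i(e)\,\alpha_i(1,e),$$ where $\alpha_i(z,e)=\mathbb E\!\left[\frac{I(Z_i=z,E_i=e)}{\sum_{j}I(Z_j=z)}\right]$ and $\alpha_i(z)=\sum_e\alpha_i(z,e)=\mathbb E\!\left[\frac{I(Z_i=z)}{\sum_j I(Z_j=z)}\right]$.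
   Context: Each unit $i$ has an interference neighborhood $N_i$ and an exposure function $f$ mapping $\{0,1\}^{N_i}$ onto $\{0,\dots,K_i-1\}$; the random exposure is $E_i=f(\mathbf Z_{N_i})$. Exposure level $0$ means "not exposed". The potential outcomes $Y_i(z,e)$ are fixed numbers; the observed outcome is $Y_i^{obs}=Y_i(Z_i,E_i)$ and all expectations are over the design. *)

theory Defs
  imports "HOL-Probability.Probability"
begin

text \<open>Units are the elements of a finite type 'u; a treatment assignment is
  a function 'u => bool (True = treated). A design is a pmf on assignments.\<close>

definition Yobs :: "('u \<Rightarrow> bool \<Rightarrow> nat \<Rightarrow> real) \<Rightarrow> ('u \<Rightarrow> ('u \<Rightarrow> bool) \<Rightarrow> nat)
    \<Rightarrow> 'u \<Rightarrow> ('u \<Rightarrow> bool) \<Rightarrow> real" where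
  "Yobs Y E i Z = Y i (Z i) (E i Z)"

definition beta_naive :: "('u::finite \<Rightarrow> bool \<Rightarrow> nat \<Rightarrow> real) \<Rightarrow> ('u \<Rightarrow> ('u \<Rightarrow> bool) \<Rightarrow> nat)
    \<Rightarrow> ('u \<Rightarrow> bool) \<Rightarrow> real" where
  "beta_naive Y E Z =
     (\<Sum>i\<in>UNIV. Yobs Y E i Z * of_bool (Z i)) / (\<Sum>i\<in>UNIV. of_bool (Z i))
   - (\<Sum>i\<in>UNIV. Yobs Y E i Z * (1 - of_bool (Z i))) / (\<Sum>i\<in>UNIV. 1 - of_bool (Z i))"

definition DTE :: "('u::finite \<Rightarrow> bool \<Rightarrow> nat \<Rightarrow> real) \<Rightarrow> real" where
  "DTE Y = (1 / real CARD('u)) * (\<Sum>i\<in>UNIV. Y i True 0 - Y i False 0)"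

definition alpha_ze :: "('u::finite \<Rightarrow> bool) pmf \<Rightarrow> ('u \<Rightarrow> ('u \<Rightarrow> bool) \<Rightarrow> nat)
    \<Rightarrow> 'u \<Rightarrow> bool \<Rightarrow> nat \<Rightarrow> real" where
  "alpha_ze p E i z e = measure_pmf.expectation p
     (\<lambda>Z. of_bool (Z i = z \<and> E i Z = e) / (\<Sum>j\<in>UNIV. of_bool (Z j = z)))"

definition alpha_z :: "('u::finite \<Rightarrow> bool) pmf \<Rightarrow> 'u \<Rightarrow> bool \<Rightarrow> real" where
  "alpha_z p i z = measure_pmf.expectation p
     (\<lambda>Z. of_bool (Z i = z) / (\<Sum>j\<in>UNIV. of_bool (Z j = z)))"

end

theory Submission
  imports Defs
begin

text \<open>Under the additive outcome model the observed outcome of unit i splits into the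
  parts A i (Z i), B i (E i Z) and Z i * C i (E i Z). Since B i 0 = C i 0 = 0, the last two are
  sums over the nonzero exposure levels e weighted by the indicator of E i Z = e. Plugging this
  into the difference of arm means makes the naive estimator, for every assignment Z, a linear
  combination of the variables I(Z i = z, E i Z = e) / sum_j I(Z j = z) whose coefficients do
  not depend on Z; linearity of expectation then gives the bias formula.

  Nor are locality and surjectivity
  of the exposure mapping needed.\<close>

lemma sum_nonzero_levels_indicator:
  fixes g :: "nat \<Rightarrow> real"
  assumes "g 0 = 0" and "e0 < K"
  shows "(\<Sum>e\<in>{1..<K}. g e * (of_bool (e0 = e) * c)) = g e0 * c"
proof -
  have "(\<Sum>e\<in>{1..<K}. g e * (of_bool (e0 = e) * c)) = (\<Sum>e\<in>{1..<K}. if e = e0 then g e * c else 0)"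
    by (rule sum.cong) auto
  also have "\<dots> = (if e0 \<in> {1..<K} then g e0 * c else 0)"
    by (simp add: sum.delta')
  also have "\<dots> = g e0 * c"
    using assms by (cases "e0 = 0") auto
  finally show ?thesis .
qed

locale additive_exposure_model =
  fixes E :: "'u::finite \<Rightarrow> ('u \<Rightarrow> bool) \<Rightarrow> nat"
    and K :: "'u \<Rightarrow> nat"
    and Y :: "'u \<Rightarrow> bool \<Rightarrow> nat \<Rightarrow> real"
    and A :: "'u \<Rightarrow> bool \<Rightarrow> real"
    and B C :: "'u \<Rightarrow> nat \<Rightarrow> real"
  assumes E_range: "\<And>i Z. E i Z < K i"
    and Y_form: "\<And>i z e. e < K i \<Longrightarrow> Y i z e = A i z + B i e + of_bool z * C i e"
    and B0: "\<And>i. B i 0 = 0"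
    and C0: "\<And>i. C i 0 = 0"
begin

lemma unit_arm_contribution:
  "Yobs Y E i Z * of_bool (Z i) / n1 - Yobs Y E i Z * (1 - of_bool (Z i)) / n0 =
      (A i True * (of_bool (Z i = True) / n1) - A i False * (of_bool (Z i = False) / n0))
    + (\<Sum>e\<in>{1..<K i}. B i e * (of_bool (Z i = True \<and> E i Z = e) / n1
                                - of_bool (Z i = False \<and> E i Z = e) / n0))
    + (\<Sum>e\<in>{1..<K i}. C i e * (of_bool (Z i = True \<and> E i Z = e) / n1))"
proof (cases "Z i")
  case True
  then show ?thesis
    using sum_nonzero_levels_indicator[of "B i" "E i Z" "K i" "1 / n1", OF B0 E_range]
      sum_nonzero_levels_indicator[of "C i" "E i Z" "K i" "1 / n1", OF C0 E_range]
    by (simp add: Yobs_def Y_form[OF E_range] add_divide_distrib)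
next
  case False
  then show ?thesis
    using sum_nonzero_levels_indicator[of "B i" "E i Z" "K i" "- 1 / n0", OF B0 E_range]
    by (simp add: Yobs_def Y_form[OF E_range] add_divide_distrib)
qed

lemma beta_naive_decomposition:
  fixes Z :: "'u \<Rightarrow> bool"
  defines "n \<equiv> \<lambda>z. \<Sum>j\<in>UNIV. of_bool (Z j = z) :: real"
  shows "beta_naive Y E Z =
      (\<Sum>i\<in>UNIV. A i True * (of_bool (Z i = True) / n True)
                 - A i False * (of_bool (Z i = False) / n False))
    + (\<Sum>i\<in>UNIV. \<Sum>e\<in>{1..<K i}. B i e * (of_bool (Z i = True \<and> E i Z = e) / n True
                                           - of_bool (Z i = False \<and> E i Z = e) / n False))
    + (\<Sum>i\<in>UNIV. \<Sum>e\<in>{1..<K i}. C i e * (of_bool (Z i = True \<and> E i Z = e) / n True))"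
proof -
  have "(\<Sum>i\<in>UNIV. 1 - of_bool (Z i) :: real) = n False"
    unfolding n_def by (rule sum.cong) auto
  moreover have "(\<Sum>i\<in>UNIV. of_bool (Z i) :: real) = n True"
    unfolding n_def by simp
  ultimately have "beta_naive Y E Z =
      (\<Sum>i\<in>UNIV. Yobs Y E i Z * of_bool (Z i) / n True
                 - Yobs Y E i Z * (1 - of_bool (Z i)) / n False)"
    unfolding beta_naive_def sum_divide_distrib by (simp only: sum_subtractf)
  then show ?thesis
    by (simp add: unit_arm_contribution sum.distrib)
qed

lemma expectation_beta_naive:
  fixes p :: "('u \<Rightarrow> bool) pmf"
  shows "measure_pmf.expectation p (beta_naive Y E) =
      (\<Sum>i\<in>UNIV. A i True * alpha_z p i True - A i False * alpha_z p i False)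
    + (\<Sum>i\<in>UNIV. \<Sum>e\<in>{1..<K i}. B i e * (alpha_ze p E i True e - alpha_ze p E i False e))
    + (\<Sum>i\<in>UNIV. \<Sum>e\<in>{1..<K i}. C i e * alpha_ze p E i True e)"
proof -
  have integrable: "integrable (measure_pmf p) f" for f :: "('u \<Rightarrow> bool) \<Rightarrow> real"
    by (rule integrable_measure_pmf_finite) simp
  \<comment> \<open>without times_divide_eq_right the constant coefficients stay outside the
    quotients and are pulled out of the integrals\<close>
  show ?thesis
    unfolding beta_naive_decomposition alpha_z_def alpha_ze_def
    by (simp add: integrable Bochner_Integration.integral_add Bochner_Integration.integral_diff
        Bochner_Integration.integral_sum del: times_divide_eq_right)
qed

lemma DTE_additive: "DTE Y = (1 / real CARD('u)) * (\<Sum>i\<in>UNIV. A i True - A i False)"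
proof -
  have "0 < K i" for i
    using E_range[of i undefined] by simp
  then show ?thesis
    by (simp add: DTE_def Y_form B0 C0)
qed

end

theorem proposition10:
  fixes p :: "('u::finite \<Rightarrow> bool) pmf"
    and N :: "'u \<Rightarrow> 'u set"
    and E :: "'u \<Rightarrow> ('u \<Rightarrow> bool) \<Rightarrow> nat"
    and K :: "'u \<Rightarrow> nat"
    and Y :: "'u \<Rightarrow> bool \<Rightarrow> nat \<Rightarrow> real"
    and A :: "'u \<Rightarrow> bool \<Rightarrow> real"
    and B C :: "'u \<Rightarrow> nat \<Rightarrow> real"
  assumes design: "\<forall>Z\<in>set_pmf p. (\<exists>i. Z i) \<and> (\<exists>j. \<not> Z j)"
    and E_local: "\<And>i Z Z'. (\<forall>j\<in>N i. Z j = Z' j) \<Longrightarrow> E i Z = E i Z'"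
    and E_range: "\<And>i Z. E i Z < K i"
    and E_onto: "\<And>i e. e < K i \<Longrightarrow> \<exists>Z. E i Z = e"
    and Y_form: "\<And>i z e. e < K i \<Longrightarrow> Y i z e = A i z + B i e + of_bool z * C i e"
    and B0: "\<And>i. B i 0 = 0"
    and C0: "\<And>i. C i 0 = 0"
  shows "DTE Y = (1 / real CARD('u)) * (\<Sum>i\<in>UNIV. A i True - A i False)
     \<and> measure_pmf.expectation p (beta_naive Y E) - DTE Y =
         (\<Sum>i\<in>UNIV. A i True * (alpha_z p i True - 1 / real CARD('u))
                    - A i False * (alpha_z p i False - 1 / real CARD('u)))
       + (\<Sum>i\<in>UNIV. \<Sum>e\<in>{1..<K i}. B i e * (alpha_ze p E i True e - alpha_ze p E i False e))
       + (\<Sum>i\<in>UNIV. \<Sum>e\<in>{1..<K i}. C i e * alpha_ze p E i True e)"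
proof -
  interpret model: additive_exposure_model E K Y A B C
    using E_range Y_form B0 C0 by unfold_locales
  show ?thesis
    using model.DTE_additive model.expectation_beta_naive[of p]
    by (simp add: algebra_simps sum_subtractf sum.distrib sum_distrib_left)
qed

end
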